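(* Let $d=2$, $X\sim\mathcal{N}(0,I_2)$ independent of $\beta$, $\bar\beta=(1,0)$ and $\beta=\bar\beta+\epsilon$ with $\epsilon=(1,-1)$ or $\epsilon=(-1,1)$ each with probability $1/2$ (so $\epsilon$ and $-\epsilon$ have the same distribution). Then no solution $\hat\beta^{\mathrm{RLHF}}$ of the moment equation $\mathbb{E}_X[\sigma(X^\top\hat\beta^{\mathrm{RLHF}})X]=\mathbb{E}_X[\mathbb{E}_\beta[\sigma(X^\top\beta)]X]$ is a scalar multiple of $\bar\beta$; in particular the RLHF estimator does not recover the direction of $\bar\beta$ even though the heterogeneity is symmetric. *)

theory Defs
  imports "HOL-Probability.Probability"
begin

definition sigmoid :: "real \<Rightarrow> real" where
  "sigmoid t = 1 / (1 + exp (- t))"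

definition gauss2 :: "(real \<times> real) measure" where
  "gauss2 = density lborel std_normal_density \<Otimes>\<^sub>M density lborel std_normal_density"

definition eps_dist :: "(real \<times> real) pmf" where
  "eps_dist = pmf_of_set {(1, -1), (-1, 1)}"

definition beta_bar :: "real \<times> real" where
  "beta_bar = (1, 0)"

end

theory Submission
  imports Defs
begin

text \<open>
  If \<open>b = (c, 0)\<close>, the second coordinate of the left-hand side is
  \<open>E[\<sigma>(c x) y] = 0\<close>, since \<open>y \<mapsto> -y\<close> preserves the Gaussian law.
  Since \<open>\<beta>\<close> is \<open>(2, -1)\<close> or \<open>(0, 1)\<close>, the second coordinate of the
  right-hand side is \<open>E[(\<sigma>(2x - y) + \<sigma>(y)) y] / 2\<close>.
  Symmetrising in \<open>x \<mapsto> -x\<close> and using \<open>\<sigma>(-t) = 1 - \<sigma>(t)\<close> turns it into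
  \<open>E[y (2\<sigma>(y) - \<sigma>(y + 2x) - \<sigma>(y - 2x))] / 4\<close>, and the integrand is positive
  off the axes because
  \<open>2\<sigma>(y) - \<sigma>(y + t) - \<sigma>(y - t)\<close> has the sign of \<open>y\<close> for \<open>t \<noteq> 0\<close>.
\<close>

lemma sigmoid_eq_exp: "sigmoid t = exp t / (1 + exp t)"
  unfolding sigmoid_def by (simp add: exp_minus field_simps)

lemma sigmoid_pos: "0 < sigmoid t"
  unfolding sigmoid_def by (simp add: add_pos_pos)

lemma sigmoid_less_1: "sigmoid t < 1"
proof -
  have "0 < 1 + exp t"
    by (simp add: add_pos_pos)
  then show ?thesis
    unfolding sigmoid_eq_exp by (simp add: divide_less_eq)
qed

lemma abs_sigmoid_le_1: "\<bar>sigmoid t\<bar> \<le> 1"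
  using sigmoid_pos[of t] sigmoid_less_1[of t] by simp

lemma abs_mean_sigmoid_le_1: "\<bar>(sigmoid a + sigmoid b) / 2\<bar> \<le> 1"
  using sigmoid_pos[of a] sigmoid_less_1[of a] sigmoid_pos[of b] sigmoid_less_1[of b] by simp

lemma abs_sigmoid_second_difference_le_2: "\<bar>2 * sigmoid y - sigmoid (y + t) - sigmoid (y - t)\<bar> \<le> 2"
  using sigmoid_pos[of y] sigmoid_pos[of "y + t"] sigmoid_pos[of "y - t"]
    sigmoid_less_1[of y] sigmoid_less_1[of "y + t"] sigmoid_less_1[of "y - t"]
  by simp

lemma sigmoid_minus: "sigmoid (- t) = 1 - sigmoid t"
proof -
  have "1 + exp t \<noteq> 0"
    using exp_gt_zero[of t] by linarith
  then show ?thesis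
    unfolding sigmoid_eq_exp by (simp add: exp_minus field_simps)
qed

lemma borel_measurable_sigmoid [measurable]: "sigmoid \<in> borel_measurable borel"
  unfolding sigmoid_def[abs_def] by measurable

lemma sigmoid_second_difference:
  "2 * sigmoid y - sigmoid (y + t) - sigmoid (y - t) =
    exp y * (exp y - 1) * (exp t - 1)\<^sup>2 / ((1 + exp y) * (1 + exp y * exp t) * (exp y + exp t))"
proof -
  define a b where "a = exp y" and "b = exp t"
  have "a > 0" "b > 0"
    unfolding a_def b_def by simp_all
  then have "1 + a \<noteq> 0" "1 + a * b \<noteq> 0" "a + b \<noteq> 0"
    by (simp_all add: add_pos_pos add_nonneg_eq_0_iff)
  have "2 * sigmoid y - sigmoid (y + t) - sigmoid (y - t)
      = 2 * a / (1 + a) - a * b / (1 + a * b) - a / (a + b)"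
    using \<open>b > 0\<close> unfolding sigmoid_eq_exp exp_add exp_diff a_def b_def
    by (simp add: field_simps add_pos_pos)
  also have "\<dots> = (2 * a * (1 + a * b) * (a + b) - a * b * (1 + a) * (a + b) - a * (1 + a) * (1 + a * b))
      / ((1 + a) * (1 + a * b) * (a + b))"
    using \<open>1 + a \<noteq> 0\<close> \<open>1 + a * b \<noteq> 0\<close> \<open>a + b \<noteq> 0\<close>
    by (simp add: divide_simps) (simp add: algebra_simps)
  also have "\<dots> = a * (a - 1) * (b - 1)\<^sup>2 / ((1 + a) * (1 + a * b) * (a + b))"
    by (simp add: algebra_simps power2_eq_square)
  finally show ?thesis
    unfolding a_def b_def .
qed

lemma sigmoid_second_difference_mult_pos:
  assumes "y \<noteq> 0" "t \<noteq> 0"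
  shows "0 < y * (2 * sigmoid y - sigmoid (y + t) - sigmoid (y - t))"
proof -
  have "0 < y * (exp y - 1)"
    using assms(1) by (cases "y > 0") (simp_all add: mult_neg_neg)
  moreover have "0 < (exp t - 1)\<^sup>2"
    using assms(2) by simp
  ultimately have "0 < exp y * (y * (exp y - 1)) * (exp t - 1)\<^sup>2"
    by simp
  then have "0 < exp y * (y * (exp y - 1)) * (exp t - 1)\<^sup>2
      / ((1 + exp y) * (1 + exp y * exp t) * (exp y + exp t))"
    by (intro divide_pos_pos) (simp_all add: add_pos_pos)
  then show ?thesis
    unfolding sigmoid_second_difference by (simp add: mult_ac)
qed

abbreviation std_normal :: "real measure" where
  "std_normal \<equiv> density lborel std_normal_density"

lemma prob_space_std_normal: "prob_space std_normal"
  by (rule prob_space_normal_density) simp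

lemma pair_prob_space_std_normal: "pair_prob_space std_normal std_normal"
  unfolding pair_prob_space_def pair_sigma_finite_def
  using prob_space_std_normal prob_space_imp_sigma_finite by blast

lemma distr_std_normal_uminus: "distr std_normal borel uminus = std_normal"
proof -
  have "distr std_normal borel uminus = density (distr lborel borel uminus) std_normal_density"
    by (subst density_distr) (auto simp: normal_density_def)
  then show ?thesis
    by (simp add: lborel_distr_uminus)
qed

lemma integrable_std_normal_abs: "integrable std_normal abs"
  using integrable_std_normal_moment_abs[of 1]
  by (subst integrable_density) (auto simp: normal_density_nonneg)

lemma AE_std_normal_nonzero: "AE x in std_normal. x \<noteq> 0"
  by (subst AE_density) (auto intro: AE_lborel_singleton[THEN AE_mp])

lemma prob_space_gauss2: "prob_space gauss2"
  unfolding gauss2_def by (intro prob_space_pair prob_space_std_normal)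

lemma sets_gauss2 [measurable_cong]: "sets gauss2 = sets (borel \<Otimes>\<^sub>M borel)"
  unfolding gauss2_def by (intro sets_pair_measure_cong) simp_all

lemma measurable_gauss2_ident [measurable]: "(\<lambda>X. X) \<in> borel_measurable gauss2"
  by (rule measurable_ident_sets) (simp only: sets_gauss2 borel_prod)

lemma distr_gauss2_map_prod:
  assumes [measurable]: "f \<in> borel_measurable borel" "g \<in> borel_measurable borel"
    and "distr std_normal borel f = std_normal" "distr std_normal borel g = std_normal"
  shows "distr gauss2 gauss2 (map_prod f g) = gauss2"
proof -
  have "distr gauss2 gauss2 (map_prod f g) = distr std_normal borel f \<Otimes>\<^sub>M distr std_normal borel g"
    unfolding gauss2_def using prob_space_std_normal
    by (subst pair_measure_distr)
       (auto simp: map_prod_def prob_space_imp_sigma_finite assms(3,4) intro!: distr_cong)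
  then show ?thesis
    by (simp add: assms(3,4) gauss2_def)
qed

lemma integral_gauss2_map_prod:
  fixes h :: "real \<times> real \<Rightarrow> 'a::{banach, second_countable_topology}"
  assumes [measurable]: "f \<in> borel_measurable borel" "g \<in> borel_measurable borel"
    "h \<in> borel_measurable gauss2"
    and "distr std_normal borel f = std_normal" "distr std_normal borel g = std_normal"
  shows "(\<integral>X. h (map_prod f g X) \<partial>gauss2) = integral\<^sup>L gauss2 h"
proof -
  have "map_prod f g \<in> measurable gauss2 gauss2"
    by (simp add: map_prod_def)
  then show ?thesis
    using integral_distr[of "map_prod f g" gauss2 gauss2 h]
    by (simp add: distr_gauss2_map_prod assms)
qed

lemma integral_gauss2_uminus_fst:
  fixes h :: "real \<times> real \<Rightarrow> 'a::{banach, second_countable_topology}"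
  assumes "h \<in> borel_measurable gauss2"
  shows "(\<integral>X. h (- fst X, snd X) \<partial>gauss2) = integral\<^sup>L gauss2 h"
  using integral_gauss2_map_prod[of uminus "\<lambda>x. x" h] assms
  by (simp add: distr_id2 distr_std_normal_uminus map_prod_def case_prod_beta')

lemma integral_gauss2_uminus_snd:
  fixes h :: "real \<times> real \<Rightarrow> 'a::{banach, second_countable_topology}"
  assumes "h \<in> borel_measurable gauss2"
  shows "(\<integral>X. h (fst X, - snd X) \<partial>gauss2) = integral\<^sup>L gauss2 h"
  using integral_gauss2_map_prod[of "\<lambda>x. x" uminus h] assms
  by (simp add: distr_id2 distr_std_normal_uminus map_prod_def case_prod_beta')

lemma integrable_gauss2_abs_fst: "integrable gauss2 (\<lambda>X. \<bar>fst X\<bar>)"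
proof -
  have "distr gauss2 std_normal fst = std_normal"
    unfolding gauss2_def by (rule prob_space.distr_pair_fst[OF prob_space_std_normal])
  then show ?thesis
    using integrable_std_normal_abs
    by (subst (asm) (2) \<open>distr gauss2 std_normal fst = std_normal\<close>[symmetric])
       (subst (asm) integrable_distr_eq; simp)
qed

lemma integrable_gauss2_abs_snd: "integrable gauss2 (\<lambda>X. \<bar>snd X\<bar>)"
proof -
  interpret pair_prob_space std_normal std_normal
    by (rule pair_prob_space_std_normal)
  show ?thesis
    using integrable_gauss2_abs_fst integrable_product_swap_iff[of "\<lambda>X. \<bar>snd X\<bar>"]
    by (simp add: gauss2_def case_prod_beta')
qed

lemma AE_gauss2_off_axes: "AE X in gauss2. fst X \<noteq> 0 \<and> snd X \<noteq> 0"
proof -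
  interpret pair_prob_space std_normal std_normal
    by (rule pair_prob_space_std_normal)
  have "AE x in std_normal. AE y in std_normal. x \<noteq> 0 \<and> y \<noteq> 0"
    using AE_std_normal_nonzero by eventually_elim (use AE_std_normal_nonzero in auto)
  moreover have "Measurable.pred (std_normal \<Otimes>\<^sub>M std_normal) (\<lambda>X. fst X \<noteq> 0 \<and> snd X \<noteq> 0)"
    by measurable
  ultimately show ?thesis
    unfolding gauss2_def pred_def by (intro AE_pair_measure) simp_all
qed

lemma integrable_gauss2_bounded_scaleR:
  assumes [measurable]: "s \<in> borel_measurable gauss2" and bounded: "\<And>X. \<bar>s X\<bar> \<le> B"
  shows "integrable gauss2 (\<lambda>X. s X *\<^sub>R X)"
proof (rule Bochner_Integration.integrable_bound)
  show "integrable gauss2 (\<lambda>X. B * (\<bar>fst X\<bar> + \<bar>snd X\<bar>))"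
    using integrable_gauss2_abs_fst integrable_gauss2_abs_snd by simp
  show "(\<lambda>X. s X *\<^sub>R X) \<in> borel_measurable gauss2"
    by measurable
  show "AE X in gauss2. norm (s X *\<^sub>R X) \<le> norm (B * (\<bar>fst X\<bar> + \<bar>snd X\<bar>))"
  proof (rule AE_I2)
    fix X :: "real \<times> real"
    have "norm (s X *\<^sub>R X) \<le> B * norm X"
      using bounded[of X] by (simp add: mult_right_mono)
    also have "\<dots> \<le> B * (\<bar>fst X\<bar> + \<bar>snd X\<bar>)"
      using norm_Pair_le[of "fst X" "snd X"] bounded[of X] by (simp add: mult_left_mono)
    finally show "norm (s X *\<^sub>R X) \<le> norm (B * (\<bar>fst X\<bar> + \<bar>snd X\<bar>))"
      by simp
  qed
qed

lemma integrable_gauss2_bounded_mult_snd: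
  assumes "s \<in> borel_measurable gauss2" and "\<And>X. \<bar>s X\<bar> \<le> B"
  shows "integrable gauss2 (\<lambda>X. s X * snd X)"
  using integrable_bounded_linear[OF bounded_linear_snd integrable_gauss2_bounded_scaleR[OF assms]]
  by simp

lemma snd_integral_gauss2_bounded_scaleR:
  assumes "s \<in> borel_measurable gauss2" and "\<And>X. \<bar>s X\<bar> \<le> B"
  shows "snd (\<integral>X. s X *\<^sub>R X \<partial>gauss2) = (\<integral>X. s X * snd X \<partial>gauss2)"
  using integral_snd[OF integrable_gauss2_bounded_scaleR[OF assms]] by simp

lemma expectation_eps_dist_sigmoid:
  "measure_pmf.expectation eps_dist (\<lambda>e. sigmoid (X \<bullet> (beta_bar + e)))
    = (sigmoid (2 * fst X - snd X) + sigmoid (snd X)) / 2"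
proof -
  have "measure_pmf.expectation eps_dist (\<lambda>e. sigmoid (X \<bullet> (beta_bar + e)))
      = (\<Sum>e\<in>{(1, -1), (-1, 1)}. sigmoid (X \<bullet> (beta_bar + e))) / card {(1::real, -1::real), (-1, 1)}"
    unfolding eps_dist_def by (rule integral_pmf_of_set) auto
  also have "\<dots> = (sigmoid (2 * fst X - snd X) + sigmoid (snd X)) / 2"
    by (cases X) (simp add: beta_bar_def algebra_simps)
  finally show ?thesis .
qed

lemma integral_gauss2_fst_mult_snd:
  assumes [measurable]: "g \<in> borel_measurable borel"
  shows "(\<integral>X. g (fst X) * snd X \<partial>gauss2) = 0"
proof -
  have "(\<integral>X. g (fst X) * snd X \<partial>gauss2) = (\<integral>X. g (fst X) * - snd X \<partial>gauss2)"
    using integral_gauss2_uminus_snd[of "\<lambda>X. g (fst X) * snd X"] by simp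
  also have "\<dots> = - (\<integral>X. g (fst X) * snd X \<partial>gauss2)"
    by simp
  finally show ?thesis
    by linarith
qed

lemma integral_gauss2_sigmoid_second_difference_pos:
  "0 < (\<integral>X. (2 * sigmoid (snd X) - sigmoid (snd X + 2 * fst X) - sigmoid (snd X - 2 * fst X))
          * snd X \<partial>gauss2)"
  (is "0 < integral\<^sup>L gauss2 ?K")
proof -
  interpret prob_space gauss2
    by (rule prob_space_gauss2)
  have "integrable gauss2 ?K"
    by (intro integrable_gauss2_bounded_mult_snd[where B = 2] abs_sigmoid_second_difference_le_2)
      measurable
  moreover have "AE X in gauss2. 0 < ?K X"
    using AE_gauss2_off_axes
    by (rule eventually_mono)
      (use sigmoid_second_difference_mult_pos in \<open>simp add: mult.commute\<close>)
  ultimately have "(\<integral>X. 0 \<partial>gauss2) < integral\<^sup>L gauss2 ?K"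
    by (intro integral_less_AE_space) (simp_all add: emeasure_space_1)
  then show ?thesis
    by simp
qed

lemma integral_gauss2_sigmoid_mixture_eq:
  "(\<integral>X. (sigmoid (2 * fst X - snd X) + sigmoid (snd X)) / 2 * snd X \<partial>gauss2) =
    (\<integral>X. (2 * sigmoid (snd X) - sigmoid (snd X + 2 * fst X) - sigmoid (snd X - 2 * fst X))
        * snd X \<partial>gauss2) / 4"
proof -
  define F where "F = (\<lambda>X::real \<times> real. (sigmoid (2 * fst X - snd X) + sigmoid (snd X)) / 2 * snd X)"
  define K where "K = (\<lambda>X::real \<times> real.
    (2 * sigmoid (snd X) - sigmoid (snd X + 2 * fst X) - sigmoid (snd X - 2 * fst X)) * snd X)"
  have F_reflect: "F X + F (- fst X, snd X) = snd X + K X / 2" for X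
  proof -
    obtain x y where X: "X = (x, y)"
      by fastforce
    have "sigmoid (2 * x - y) = 1 - sigmoid (y - 2 * x)"
      by (metis minus_diff_eq sigmoid_minus)
    moreover have "sigmoid (2 * - x - y) = 1 - sigmoid (y + 2 * x)"
      by (metis sigmoid_minus minus_add_distrib mult_minus_right add.commute diff_conv_add_uminus)
    ultimately show ?thesis
      unfolding X F_def K_def fst_conv snd_conv by (simp only:) (simp add: field_simps)
  qed
  have [measurable]: "F \<in> borel_measurable gauss2"
    unfolding F_def by measurable
  have integrable_F: "integrable gauss2 F"
    unfolding F_def by (intro integrable_gauss2_bounded_mult_snd[where B = 1] abs_mean_sigmoid_le_1) measurable
  have integrable_F_reflect: "integrable gauss2 (\<lambda>X. F (- fst X, snd X))"
    unfolding F_def fst_conv snd_conv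
    by (intro integrable_gauss2_bounded_mult_snd[where B = 1] abs_mean_sigmoid_le_1) measurable
  have integrable_K: "integrable gauss2 K"
    unfolding K_def
    by (intro integrable_gauss2_bounded_mult_snd[where B = 2] abs_sigmoid_second_difference_le_2) measurable
  have integrable_snd: "integrable gauss2 snd"
    using integrable_gauss2_bounded_mult_snd[of "\<lambda>_. 1" 1] by simp
  have "2 * integral\<^sup>L gauss2 F = integral\<^sup>L gauss2 F + (\<integral>X. F (- fst X, snd X) \<partial>gauss2)"
    using integral_gauss2_uminus_fst[of F] by simp
  also have "\<dots> = (\<integral>X. F X + F (- fst X, snd X) \<partial>gauss2)"
    using integrable_F integrable_F_reflect by (rule Bochner_Integration.integral_add[symmetric])
  also have "\<dots> = (\<integral>X. snd X + K X / 2 \<partial>gauss2)"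
    by (simp only: F_reflect)
  also have "\<dots> = (\<integral>X. snd X \<partial>gauss2) + integral\<^sup>L gauss2 K / 2"
    using integrable_snd integrable_K by simp
  also have "(\<integral>X. snd X \<partial>gauss2) = 0"
    using integral_gauss2_fst_mult_snd[of "\<lambda>_. 1"] by simp
  finally show ?thesis
    unfolding F_def K_def by simp
qed

theorem mainTheorem9:
  fixes b :: "real \<times> real"
  assumes "(\<integral>X. sigmoid (X \<bullet> b) *\<^sub>R X \<partial>gauss2)
         = (\<integral>X. measure_pmf.expectation eps_dist (\<lambda>e. sigmoid (X \<bullet> (beta_bar + e))) *\<^sub>R X \<partial>gauss2)"
  shows "\<not> (\<exists>c::real. b = c *\<^sub>R beta_bar)"
proof
  let ?E = "\<lambda>X. measure_pmf.expectation eps_dist (\<lambda>e. sigmoid (X \<bullet> (beta_bar + e)))"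
  assume "\<exists>c::real. b = c *\<^sub>R beta_bar"
  then obtain c where "b = (c, 0)"
    by (auto simp: beta_bar_def)
  then have inner_b: "X \<bullet> b = c * fst X" for X
    by (cases X) (simp add: mult.commute)
  have "snd (\<integral>X. sigmoid (X \<bullet> b) *\<^sub>R X \<partial>gauss2) = 0"
    using snd_integral_gauss2_bounded_scaleR[of "\<lambda>X. sigmoid (c * fst X)" 1]
      integral_gauss2_fst_mult_snd[of "\<lambda>x. sigmoid (c * x)"] abs_sigmoid_le_1
    by (simp add: inner_b)
  moreover have "0 < snd (\<integral>X. ?E X *\<^sub>R X \<partial>gauss2)"
    using snd_integral_gauss2_bounded_scaleR[of "\<lambda>X. (sigmoid (2 * fst X - snd X) + sigmoid (snd X)) / 2" 1]
      abs_mean_sigmoid_le_1 integral_gauss2_sigmoid_mixture_eq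
      integral_gauss2_sigmoid_second_difference_pos
    by (simp add: expectation_eps_dist_sigmoid)
  ultimately show False
    using assms by simp
qed

end
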